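(* Let $m,k$ be positive integers with $m>k+2$, and let $\pi$ be a permutation of $\mathbb{F}_{2^m}$ satisfying Property (P) (defined in the context). For each $z\in\mathbb{F}_{2^k}$ define $f^{(z)}:\mathbb{F}_{2^m}\times\mathbb{F}_{2^m}\to\mathbb{F}_2$ by \[ f^{(z)}(x_1,x_2)=\begin{cases}{\rm Tr}_1^m\bigl(x_1\,\pi(x_2)\bigr), & \text{if } {\rm Tr}_1^k(z)=0,\\ {\rm Tr}_1^m\bigl(x_2\,\pi(x_1)\bigr), & \text{if } {\rm Tr}_1^k(z)=1.\end{cases} \] Then the function $f:\mathbb{F}_{2^m}\times\mathbb{F}_{2^m}\times\mathbb{F}_{2^k}\times\mathbb{F}_{2^k}\to\mathbb{F}_2$, $f(x_1,x_2,y,z)=f^{(z)}(x_1,x_2)+{\rm Tr}_1^k(yz)$, is a GMM function that does not belong to the class $MM^{\#}$.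
   Context: ${\rm Tr}_a^b$ denotes the trace map from $\mathbb{F}_{2^b}$ to $\mathbb{F}_{2^a}$. Property (P) of a permutation $\pi$ of $\mathbb{F}_{2^m}$: for all $(a_1,a_2),(b_1,b_2)\in\mathbb{F}_{2^m}\times\mathbb{F}_{2^m}$, the two identities $\pi(x)+\pi(x+a_2)+\pi(x+b_2)+\pi(x+a_2+b_2)=0$ and ${\rm Tr}_1^m\bigl(a_1\pi(x+a_2)+b_1\pi(x+b_2)+(a_1+b_1)\pi(x+a_2+b_2)\bigr)=0$ hold for all $x\in\mathbb{F}_{2^m}$ if and only if one of the following holds: $(a_1,a_2)=(0,0)$, $(b_1,b_2)=(0,0)$, $(a_1,a_2)=(b_1,b_2)$, or $a_2=b_2=0$. A Boolean function $g$ on an $n$-dimensional $\mathbb{F}_2$-space $V$ is bent if $|\sum_{x\in V}(-1)^{g(x)+\langle b,x\rangle}|=2^{n/2}$ for all $b\in V$ (for a nondegenerate inner product). A GMM (generalized Maiorana–McFarland) function is a function of the form $f(x,y,z)=f^{(z)}(x)+{\rm Tr}_1^k(yz)$ on $W\times\mathbb{F}_{2^k}\times\mathbb{F}_{2^k}$ where every $f^{(z)}$ is bent on $W$. Two Boolean functions $f,g$ on $V$ are EA-equivalent if $g(x)=f(L(x)+a)+\langle c,x\rangle+b$ with $L$ a linear permutation of $V$, $a,c\in V$, $b\in\mathbb{F}_2$. The Maiorana–McFarland class $MM$ on $\mathbb{F}_{2^N}\times\mathbb{F}_{2^N}$ consists of functions ${\rm Tr}_1^N(x\pi'(y))+g(y)$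 with $\pi'$ a permutation of $\mathbb{F}_{2^N}$ and $g$ arbitrary; $MM^{\#}$ denotes the set of all Boolean functions on a $2N$-dimensional $\mathbb{F}_2$-space that are EA-equivalent (after an $\mathbb{F}_2$-linear identification of the space with $\mathbb{F}_{2^N}\times\mathbb{F}_{2^N}$) to a function of $MM$. *)

theory Defs
  imports Complex_Main "HOL-Library.Product_Plus" "HOL-Library.Cardinality"
begin

definition tr :: "nat \<Rightarrow> 'a::field \<Rightarrow> 'a" where
  "tr n x = (\<Sum>i<n. x ^ (2 ^ i))"

text \<open>The trace viewed as a Boolean value (element of F_2 = bool, True = 1).\<close>
definition trb :: "nat \<Rightarrow> 'a::field \<Rightarrow> bool" where
  "trb n x \<longleftrightarrow> tr n x = 1"

text \<open>F_2-linear functionals on an elementary abelian 2-group (addition in F_2 is xor).\<close>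
definition lin_functional :: "('v::ab_group_add \<Rightarrow> bool) \<Rightarrow> bool" where
  "lin_functional l \<longleftrightarrow> (\<forall>x y. l (x + y) = (l x \<noteq> l y))"

definition lin_map :: "('v::ab_group_add \<Rightarrow> 'w::ab_group_add) \<Rightarrow> bool" where
  "lin_map L \<longleftrightarrow> (\<forall>x y. L (x + y) = L x + L y)"

text \<open>The linear functionals x \<mapsto> <b,x> for a nondegenerate inner
  product are exactly all linear functionals.\<close>
definition bent :: "('v::{ab_group_add,finite} \<Rightarrow> bool) \<Rightarrow> bool" where
  "bent g \<longleftrightarrow> (\<forall>l. lin_functional l \<longrightarrow>
      \<bar>\<Sum>x\<in>UNIV. (-1::real) ^ (if g x \<noteq> l x then 1 else 0)\<bar> = sqrt (real (card (UNIV :: 'v set))))"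

definition is_GMM :: "nat \<Rightarrow> (('w::{ab_group_add,finite}) \<times> ('b::field) \<times> 'b \<Rightarrow> bool) \<Rightarrow> bool" where
  "is_GMM k f \<longleftrightarrow> (\<exists>fz :: 'b \<Rightarrow> 'w \<Rightarrow> bool. (\<forall>z. bent (fz z)) \<and>
      (\<forall>w y z. f (w, y, z) = (fz z w \<noteq> trb k (y * z))))"

definition EA_equiv :: "('v::ab_group_add \<Rightarrow> bool) \<Rightarrow> ('v \<Rightarrow> bool) \<Rightarrow> bool" where
  "EA_equiv f g \<longleftrightarrow> (\<exists>L a l b. lin_map L \<and> bij L \<and> lin_functional l \<and>
      (\<forall>x. g x = ((f (L x + a) \<noteq> l x) \<noteq> b)))"

definition MM :: "nat \<Rightarrow> ('c::field \<times> 'c \<Rightarrow> bool) \<Rightarrow> bool" where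
  "MM N h \<longleftrightarrow> (\<exists>\<pi>' g. bij \<pi>' \<and> (\<forall>x y. h (x, y) = (trb N (x * \<pi>' y) \<noteq> g y)))"

text \<open>MM^#: EA-equivalent, after an F_2-linear identification of V with F_{2^N} \<times> F_{2^N}
  (the field F_{2^N} being represented by the type 'c), to a function of MM.\<close>
definition MM_sharp :: "'c::field itself \<Rightarrow> nat \<Rightarrow> ('v::ab_group_add \<Rightarrow> bool) \<Rightarrow> bool" where
  "MM_sharp _ N f \<longleftrightarrow> (\<exists>(\<phi> :: 'v \<Rightarrow> 'c \<times> 'c) h. lin_map \<phi> \<and> bij \<phi> \<and> MM N h \<and>
      EA_equiv (h \<circ> \<phi>) f)"

definition property_P :: "nat \<Rightarrow> ('a::field \<Rightarrow> 'a) \<Rightarrow> bool" where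
  "property_P m \<pi> \<longleftrightarrow> (\<forall>a1 a2 b1 b2.
     (\<forall>x. \<pi> x + \<pi> (x + a2) + \<pi> (x + b2) + \<pi> (x + a2 + b2) = 0 \<and>
          tr m (a1 * \<pi> (x + a2) + b1 * \<pi> (x + b2) + (a1 + b1) * \<pi> (x + a2 + b2)) = 0)
     \<longleftrightarrow> ((a1, a2) = (0, 0) \<or> (b1, b2) = (0, 0) \<or> (a1, a2) = (b1, b2) \<or> (a2 = 0 \<and> b2 = 0)))"

end

(* Each component f^(z) is the Maiorana-McFarland function Tr(x1 pi(x2)) or its composition
   with the coordinate swap, hence bent, so f is GMM.
   If f were in MM#, the preimage U of F_(2^(m+k)) x {0} under the identification would be an
   F_2-subspace of dimension m + k on which f is affine along every coset, i.e. all second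
   derivatives of f in directions from U vanish. On the subspace U' of U where Tr(beta) = 0, the
   second derivative of f in directions u = (a, alpha, beta), v = (b, gamma, delta) is that of
   f^(z) in directions a, b plus the bilinear form Tr(alpha delta + beta gamma). Taking Tr(z) = 0
   and Tr(z) = 1, Property (P) forces a = 0, b = 0 or a = b whenever that form vanishes, and
   bilinearity then leaves room for at most 4 distinct projections a. But |U'| >= 2^(m+k-1) and
   each projection has at most 2^(2k-1) preimages in U', so there are at least 2^(m-k) > 4. *)

theory Submission
  imports Defs "HOL-Computational_Algebra.Polynomial"
begin

section \<open>Fields of order \<open>2 ^ n\<close> and the trace\<close>

lemma finite_field_power_card:
  fixes x :: "'a::{field,finite}"
  shows "x ^ CARD('a) = x"
proof (cases "x = 0")
  case False
  have "(\<Prod>y\<in>UNIV-{0}. y) = (\<Prod>y\<in>UNIV-{0}. x * y)"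
    by (rule prod.reindex_bij_witness[of _ "\<lambda>y. x * y" "\<lambda>y. y / x"]) (use False in auto)
  also have "\<dots> = x ^ (CARD('a) - 1) * (\<Prod>y\<in>UNIV-{0}. y)"
    by (simp add: prod.distrib card_Diff_singleton)
  finally have "x * x ^ (CARD('a) - 1) = x" by simp
  also have "x * x ^ (CARD('a) - 1) = x ^ CARD('a)"
    by (simp flip: power_Suc)
  finally show ?thesis .
qed simp

lemma binary_field_exp_pos:
  assumes "CARD('a::{field,finite}) = 2 ^ n"
  shows "n > 0"
proof (rule ccontr)
  assume "\<not> n > 0"
  then have "CARD('a) = 1" using assms by simp
  moreover have "card {0::'a, 1} \<le> CARD('a)" by (rule card_mono) auto
  ultimately show False by simp
qed

lemma binary_field_two_eq_0:
  assumes "CARD('a::{field,finite}) = 2 ^ n"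
  shows "2 = (0::'a)"
proof -
  have "(-1::'a) ^ (2 ^ n) = 1" using binary_field_exp_pos[OF assms] by simp
  then have "-1 = (1::'a)" using finite_field_power_card[of "-1::'a"] by (simp add: assms)
  then have "1 + 1 = (0::'a)" by (metis add.right_inverse)
  then show ?thesis by simp
qed

lemma binary_field_add_self:
  assumes "CARD('a::{field,finite}) = 2 ^ n"
  shows "(x::'a) + x = 0"
  by (simp add: binary_field_two_eq_0[OF assms] flip: mult_2)

lemma binary_field_CHAR:
  assumes "CARD('a::{field,finite}) = 2 ^ n"
  shows "CHAR('a) = 2"
proof -
  have "CHAR('a) dvd 2"
    using binary_field_two_eq_0[OF assms] by (simp add: of_nat_eq_0_iff_char_dvd[symmetric])
  then have "CHAR('a) \<le> 2" "CHAR('a) > 0" by (auto dest: dvd_imp_le intro: Nat.gr0I)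
  then show ?thesis using CHAR_not_1[where 'a='a] by linarith
qed

lemma binary_field_power_two_power_add:
  assumes "CARD('a::{field,finite}) = 2 ^ n"
  shows "((x::'a) + y) ^ (2 ^ i) = x ^ (2 ^ i) + y ^ (2 ^ i)"
  by (rule freshmans_dream') (simp_all add: binary_field_CHAR[OF assms])

lemma tr_add:
  assumes "CARD('a::{field,finite}) = 2 ^ n"
  shows "tr n ((x::'a) + y) = tr n x + tr n y"
  unfolding tr_def by (simp add: binary_field_power_two_power_add[OF assms] sum.distrib)

lemma tr_square:
  assumes "CARD('a::{field,finite}) = 2 ^ n"
  shows "tr n (x::'a) ^ 2 = tr n x"
proof -
  have "tr n x ^ 2 = (\<Sum>i<n. (x ^ 2 ^ i) ^ 2)"
    unfolding tr_def
    by (subst freshmans_dream_sum) (simp_all add: binary_field_CHAR[OF assms])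
  also have "\<dots> = (\<Sum>i<n. x ^ (2 ^ Suc i))"
    by (simp add: power_mult[symmetric] mult.commute)
  also have "\<dots> = tr n x"
    using sum.lessThan_Suc_shift[of "\<lambda>i. x ^ (2 ^ i)" n] sum.lessThan_Suc[of "\<lambda>i. x ^ (2 ^ i)" n]
    by (simp add: tr_def finite_field_power_card flip: assms)
  finally show ?thesis .
qed

lemma tr_eq_0_or_1:
  assumes "CARD('a::{field,finite}) = 2 ^ n"
  shows "tr n (x::'a) = 0 \<or> tr n x = 1"
proof -
  have "tr n x * (tr n x - 1) = 0"
    using tr_square[OF assms, of x] by (simp add: power2_eq_square algebra_simps)
  then show ?thesis by simp
qed

text \<open>The trace is a nonzero polynomial of degree \<open>2 ^ (n - 1) < 2 ^ n\<close>.\<close>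
lemma tr_not_identically_zero:
  assumes "CARD('a::{field,finite}) = 2 ^ n"
  shows "\<exists>x::'a. tr n x \<noteq> 0"
proof (rule ccontr)
  assume tr_zero: "\<nexists>x::'a. tr n x \<noteq> 0"
  define p :: "'a poly" where "p = (\<Sum>i<n. monom 1 (2 ^ i))"
  have n: "n > 0" by (rule binary_field_exp_pos[OF assms])
  have coeff_p: "coeff p j = (\<Sum>i<n. if 2 ^ i = j then 1 else 0)" for j
    unfolding p_def by (simp add: coeff_sum)
  have "coeff p 1 = (\<Sum>i<n. if i = 0 then 1 else 0)"
    unfolding coeff_p by (intro sum.cong) auto
  then have "p \<noteq> 0" using n by auto
  have "degree p \<le> 2 ^ (n - 1)"
  proof (rule degree_le, intro allI impI)
    fix j :: nat assume "j > 2 ^ (n - 1)"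
    moreover have "(2::nat) ^ i \<le> 2 ^ (n - 1)" if "i < n" for i
      using that by (intro power_increasing) auto
    ultimately show "coeff p j = 0" unfolding coeff_p by (intro sum.neutral) fastforce
  qed
  moreover have "{x. poly p x = 0} = UNIV"
    using tr_zero by (auto simp: p_def tr_def poly_sum poly_monom)
  then have "CARD('a) \<le> degree p" using card_poly_roots_bound[OF \<open>p \<noteq> 0\<close>] by simp
  moreover have "(2::nat) ^ (n - 1) < 2 ^ n" using n by simp
  ultimately show False using assms by linarith
qed

lemma trb_add:
  assumes "CARD('a::{field,finite}) = 2 ^ n"
  shows "trb n ((x::'a) + y) = (trb n x \<noteq> trb n y)"
  using tr_eq_0_or_1[OF assms, of x] tr_eq_0_or_1[OF assms, of y]
  by (elim disjE) (simp_all add: trb_def tr_add[OF assms] binary_field_two_eq_0[OF assms])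

lemma not_trb_iff:
  assumes "CARD('a::{field,finite}) = 2 ^ n"
  shows "\<not> trb n (x::'a) \<longleftrightarrow> tr n x = 0"
  using tr_eq_0_or_1[OF assms, of x] by (auto simp: trb_def)

lemma trb_zero [simp]: "\<not> trb n (0::'a::field)"
  by (simp add: trb_def tr_def power_0_left)

lemma ex_trb:
  assumes "CARD('a::{field,finite}) = 2 ^ n"
  shows "\<exists>x::'a. trb n x"
  using tr_not_identically_zero[OF assms] not_trb_iff[OF assms] by blast

lemma all_not_trb_mult_iff:
  assumes "CARD('a::{field,finite}) = 2 ^ n"
  shows "(\<forall>x. \<not> trb n (x * c)) \<longleftrightarrow> (c::'a) = 0"
proof
  assume "\<forall>x. \<not> trb n (x * c)"
  moreover obtain w :: 'a where "trb n w" using ex_trb[OF assms] by blast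
  ultimately show "c = 0" by (metis nonzero_divide_eq_eq)
qed simp

section \<open>Character sums and bentness\<close>

definition signb :: "bool \<Rightarrow> real" where
  "signb b = (-1) ^ (if b then 1 else 0)"

lemma signb_simps [simp]: "signb True = -1" "signb False = 1"
  unfolding signb_def by simp_all

lemma signb_xor: "signb (a \<noteq> b) = signb a * signb b"
  unfolding signb_def by auto

lemma lin_functional_zero: "lin_functional l \<Longrightarrow> \<not> l 0"
  unfolding lin_functional_def by (metis add.right_neutral)

lemma lin_functional_xor:
  "lin_functional l \<Longrightarrow> lin_functional l' \<Longrightarrow> lin_functional (\<lambda>x. l x \<noteq> l' x)"
  unfolding lin_functional_def by auto

lemma lin_functional_trb_mult:
  assumes "CARD('a::{field,finite}) = 2 ^ n"
  shows "lin_functional (\<lambda>x::'a. trb n (x * c))"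
  unfolding lin_functional_def by (simp add: distrib_right trb_add[OF assms])

lemma sum_signb_lin_functional:
  fixes l :: "'v::{ab_group_add,finite} \<Rightarrow> bool"
  assumes "lin_functional l"
  shows "(\<Sum>x\<in>UNIV. signb (l x)) = (if \<forall>x. \<not> l x then real CARD('v) else 0)"
proof (cases "\<forall>x. \<not> l x")
  case False
  then obtain y where "l y" by blast
  have "(\<Sum>x\<in>UNIV. signb (l x)) = (\<Sum>x\<in>UNIV. signb (l (x + y)))"
    by (rule sum.reindex_bij_witness[of _ "\<lambda>x. x + y" "\<lambda>x. x - y"]) auto
  also have "\<dots> = (\<Sum>x\<in>UNIV. - signb (l x))"
    using assms \<open>l y\<close> by (intro sum.cong) (auto simp: lin_functional_def signb_def)
  also have "\<dots> = - (\<Sum>x\<in>UNIV. signb (l x))"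
    by (rule sum_negf)
  finally show ?thesis using False by simp
qed (simp add: signb_def)

text \<open>Double counting: summing \<open>(-1)^(Tr(x c) + l x)\<close> over all \<open>x\<close> and \<open>c\<close> gives
  \<open>|F|\<close> times the number of such \<open>c\<close>, and also \<open>|F|\<close> by orthogonality of characters.\<close>
lemma ex1_trb_mult_eq:
  assumes "CARD('a::{field,finite}) = 2 ^ n" and l: "lin_functional (l :: 'a \<Rightarrow> bool)"
  shows "\<exists>!c. \<forall>x. trb n (x * c) = l x"
proof -
  let ?N = "real CARD('a)" and ?C = "{c. \<forall>x. trb n (x * c) = l x}"
  have inner: "(\<Sum>x\<in>UNIV. signb (trb n (x * c) \<noteq> l x)) = (if c \<in> ?C then ?N else 0)" for c
    using sum_signb_lin_functional[OF lin_functional_xor[OF lin_functional_trb_mult[OF assms(1)] l]]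
    by simp
  have char_sum: "(\<Sum>c\<in>UNIV. signb (trb n (c * x))) = (if x = 0 then ?N else 0)" for x :: 'a
    using sum_signb_lin_functional[OF lin_functional_trb_mult[OF assms(1), where c = x]]
    by (simp add: all_not_trb_mult_iff[OF assms(1)])
  have "?N * card ?C = (\<Sum>c\<in>UNIV. if c \<in> ?C then ?N else 0)"
    by (simp add: sum.If_cases)
  also have "\<dots> = (\<Sum>c\<in>UNIV. \<Sum>x\<in>UNIV. signb (trb n (x * c) \<noteq> l x))"
    by (simp only: inner)
  also have "\<dots> = (\<Sum>x\<in>UNIV. signb (l x) * (\<Sum>c\<in>UNIV. signb (trb n (c * x))))"
    by (subst sum.swap) (simp only: signb_xor sum_distrib_left mult.commute)
  also have "\<dots> = ?N"
    by (simp add: char_sum lin_functional_zero[OF l] if_distrib cong: if_cong)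
  finally have "card ?C = 1" by simp
  then obtain c where C: "?C = {c}" by (auto simp: card_1_singleton_iff)
  then show ?thesis by (intro ex1I[of _ c]) auto
qed

lemma lin_map_inv:
  assumes "lin_map L" and "bij L"
  shows "lin_map (inv L)"
  unfolding lin_map_def
proof (intro allI)
  fix x y
  have "L (inv L x + inv L y) = x + y"
    using assms by (simp add: lin_map_def bij_is_surj surj_f_inv_f)
  then have "inv L x + inv L y = inv L (x + y)"
    by (simp add: bij_inv_eq_iff[OF assms(2)])
  then show "inv L (x + y) = inv L x + inv L y" ..
qed

lemma lin_map_comp: "lin_map L \<Longrightarrow> lin_map M \<Longrightarrow> lin_map (M \<circ> L)"
  unfolding lin_map_def by simp

lemma lin_functional_comp:
  "lin_functional l \<Longrightarrow> lin_map L \<Longrightarrow> lin_functional (l \<circ> L)"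
  unfolding lin_functional_def lin_map_def by simp

lemma lin_map_swap: "lin_map prod.swap"
  unfolding lin_map_def by simp

lemma bent_comp_lin_map:
  fixes g :: "'w::{ab_group_add,finite} \<Rightarrow> bool" and L :: "'v::{ab_group_add,finite} \<Rightarrow> 'w"
  assumes "bent g" and "lin_map L" and "bij L"
  shows "bent (g \<circ> L)"
  unfolding bent_def signb_def[symmetric]
proof (intro allI impI)
  fix l :: "'v \<Rightarrow> bool"
  assume "lin_functional l"
  then have "lin_functional (l \<circ> inv L)"
    using lin_functional_comp lin_map_inv assms(2,3) by blast
  then have "\<bar>\<Sum>y\<in>UNIV. signb (g y \<noteq> (l \<circ> inv L) y)\<bar> = sqrt (real CARD('w))"
    using assms(1) unfolding bent_def signb_def[symmetric] by blast
  moreover have "(\<Sum>x\<in>UNIV. signb ((g \<circ> L) x \<noteq> l x)) = (\<Sum>y\<in>UNIV. signb (g y \<noteq> (l \<circ> inv L) y))"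
    by (rule sum.reindex_bij_witness[of _ "inv L" L])
      (use assms(3) in \<open>simp_all add: bij_is_inj bij_is_surj surj_f_inv_f\<close>)
  moreover have "CARD('v) = CARD('w)"
    using assms(3) by (rule bij_betw_same_card)
  ultimately show "\<bar>\<Sum>x\<in>UNIV. signb ((g \<circ> L) x \<noteq> l x)\<bar> = sqrt (real CARD('v))"
    by simp
qed

definition maiorana_mcfarland :: "nat \<Rightarrow> ('a::field \<Rightarrow> 'a) \<Rightarrow> 'a \<times> 'a \<Rightarrow> bool" where
  "maiorana_mcfarland n \<pi> = (\<lambda>(x1, x2). trb n (x1 * \<pi> x2))"

lemma lin_functional_Pair:
  assumes "lin_functional l"
  shows "l (x1, x2) = (l (x1, 0) \<noteq> l (0, x2))"
  using assms[unfolded lin_functional_def, rule_format, of "(x1, 0)" "(0, x2)"] by simp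

lemma lin_functional_Pair_left:
  assumes "lin_functional l"
  shows "lin_functional (\<lambda>x. l (x, 0))"
  unfolding lin_functional_def
  using assms[unfolded lin_functional_def, rule_format, of "(_, 0)" "(_, 0)"] by simp

lemma bent_maiorana_mcfarland:
  assumes "CARD('a::{field,finite}) = 2 ^ n" and "bij \<pi>"
  shows "bent (maiorana_mcfarland n (\<pi> :: 'a \<Rightarrow> 'a))"
  unfolding bent_def signb_def[symmetric]
proof (intro allI impI)
  fix l :: "'a \<times> 'a \<Rightarrow> bool"
  assume l: "lin_functional l"
  let ?N = "real CARD('a)"
  obtain c where c: "\<And>c'. (\<forall>x. trb n (x * c') = l (x, 0)) \<longleftrightarrow> c' = c"
    using ex1_trb_mult_eq[OF assms(1) lin_functional_Pair_left[OF l]] by blast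
  obtain x0 where "c = \<pi> x0"
    using surjD[OF bij_is_surj[OF assms(2)]] by blast
  then have x0: "\<pi> x2 = c \<longleftrightarrow> x2 = x0" for x2
    using assms(2) by (auto dest: bij_is_inj injD)
  have inner: "(\<Sum>x1\<in>UNIV. signb (trb n (x1 * \<pi> x2) \<noteq> l (x1, 0))) = (if x2 = x0 then ?N else 0)" for x2
  proof -
    have "(\<forall>x1. \<not> (trb n (x1 * \<pi> x2) \<noteq> l (x1, 0))) \<longleftrightarrow> x2 = x0"
      using c[of "\<pi> x2"] x0[of x2] by simp
    then show ?thesis
      using sum_signb_lin_functional[OF lin_functional_xor[OF
          lin_functional_trb_mult[OF assms(1), where c = "\<pi> x2"] lin_functional_Pair_left[OF l]]]
      by simp
  qed
  have l_split: "signb (trb n (x1 * \<pi> x2) \<noteq> l (x1, x2))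
      = signb (l (0, x2)) * signb (trb n (x1 * \<pi> x2) \<noteq> l (x1, 0))" for x1 x2
    using lin_functional_Pair[OF l, of x1 x2] by (simp add: signb_def)
  have "(\<Sum>x\<in>UNIV. signb (maiorana_mcfarland n \<pi> x \<noteq> l x))
      = (\<Sum>x1\<in>UNIV. \<Sum>x2\<in>UNIV. signb (trb n (x1 * \<pi> x2) \<noteq> l (x1, x2)))"
    by (simp add: sum.cartesian_product maiorana_mcfarland_def split_def)
  also have "\<dots> = (\<Sum>x2\<in>UNIV. \<Sum>x1\<in>UNIV. signb (l (0, x2)) * signb (trb n (x1 * \<pi> x2) \<noteq> l (x1, 0)))"
    by (subst sum.swap) (simp only: l_split)
  also have "\<dots> = (\<Sum>x2\<in>UNIV. signb (l (0, x2)) * (if x2 = x0 then ?N else 0))"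
    by (simp only: inner sum_distrib_left[symmetric])
  also have "\<dots> = signb (l (0, x0)) * ?N"
    by (simp add: if_distrib cong: if_cong)
  finally show "\<bar>\<Sum>x\<in>UNIV. signb (maiorana_mcfarland n \<pi> x \<noteq> l x)\<bar> = sqrt (real CARD('a \<times> 'a))"
    by (simp add: abs_mult signb_def real_sqrt_mult)
qed

section \<open>Second derivatives and the class \<open>MM\<^sup>#\<close>\<close>

definition second_derivative :: "('v::plus \<Rightarrow> bool) \<Rightarrow> 'v \<Rightarrow> 'v \<Rightarrow> 'v \<Rightarrow> bool" where
  "second_derivative f x u v \<longleftrightarrow> ((f x \<noteq> f (x + u)) \<noteq> (f (x + v) \<noteq> f (x + u + v)))"

lemma second_derivative_comp:
  assumes "lin_map L"
  shows "second_derivative (f \<circ> L) x u v = second_derivative f (L x) (L u) (L v)"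
  using assms by (simp add: second_derivative_def lin_map_def)

lemma second_derivative_affine:
  fixes f :: "'v::semigroup_add \<Rightarrow> bool"
  assumes affine: "\<And>w. w \<in> U \<Longrightarrow> f (x + w) = (f x \<noteq> A w)"
    and A_add: "\<And>u v. u \<in> U \<Longrightarrow> v \<in> U \<Longrightarrow> A (u + v) = (A u \<noteq> A v)"
    and U_add: "\<And>u v. u \<in> U \<Longrightarrow> v \<in> U \<Longrightarrow> u + v \<in> U"
    and "u \<in> U" "v \<in> U"
  shows "\<not> second_derivative f x u v"
  using affine[OF \<open>u \<in> U\<close>] affine[OF \<open>v \<in> U\<close>] affine[OF U_add[OF \<open>u \<in> U\<close> \<open>v \<in> U\<close>]]
    A_add[OF \<open>u \<in> U\<close> \<open>v \<in> U\<close>]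
  unfolding second_derivative_def add.assoc by argo

lemma MM_sharp_flat_subspace:
  fixes f :: "'v::ab_group_add \<Rightarrow> bool"
  assumes card_c: "CARD('c::{field,finite}) = 2 ^ N" and "MM_sharp TYPE('c) N f"
  obtains U where "\<And>u v. u \<in> U \<Longrightarrow> v \<in> U \<Longrightarrow> u + v \<in> U" and "card U = 2 ^ N"
    and "\<And>x u v. u \<in> U \<Longrightarrow> v \<in> U \<Longrightarrow> \<not> second_derivative f x u v"
proof -
  obtain \<phi> :: "'v \<Rightarrow> 'c \<times> 'c" and h where \<phi>: "lin_map \<phi>" "bij \<phi>"
    and "MM N h" and "EA_equiv (h \<circ> \<phi>) f"
    using assms(2) unfolding MM_sharp_def by blast
  then obtain \<pi>' g L a l b where h: "\<And>x y. h (x, y) = (trb N (x * \<pi>' y) \<noteq> g y)"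
    and L: "lin_map L" "bij L" and l: "lin_functional l"
    and f: "\<And>x. f x = ((h (\<phi> (L x + a)) \<noteq> l x) \<noteq> b)"
    unfolding MM_def EA_equiv_def by auto
  define M where "M = \<phi> \<circ> L"
  have M: "lin_map M" "bij M"
    unfolding M_def using \<phi> L by (simp_all add: lin_map_comp bij_comp)
  then have M_add: "M (u + v) = M u + M v" for u v
    by (simp add: lin_map_def)
  define U where "U = M -` (UNIV \<times> {0})"
  have U_iff: "u \<in> U \<longleftrightarrow> snd (M u) = 0" for u
    by (simp add: U_def mem_Times_iff)
  have U_add: "u + v \<in> U" if "u \<in> U" "v \<in> U" for u v
    using that by (simp add: U_iff M_add)
  have card_U: "card U = CARD('c)"
    unfolding U_def using M(2)
    by (simp add: card_vimage_inj bij_is_inj bij_is_surj card_cartesian_product)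
  have flat: "\<not> second_derivative f x u v" if "u \<in> U" "v \<in> U" for x u v
  proof -
    obtain p q where pq: "\<phi> (L x + a) = (p, q)" by fastforce
    define A where "A w = (trb N (fst (M w) * \<pi>' q) \<noteq> l w)" for w
    show ?thesis
    proof (rule second_derivative_affine[OF _ _ U_add that])
      fix w assume "w \<in> U"
      then have "\<phi> (L (x + w) + a) = (p + fst (M w), q)"
        using \<phi>(1) L(1) pq by (simp add: lin_map_def U_iff M_def add_ac prod_eq_iff)
      then show "f (x + w) = (f x \<noteq> A w)"
        using l pq by (simp add: f h A_def lin_functional_def distrib_right trb_add[OF card_c]) argo
    next
      fix u v
      show "A (u + v) = (A u \<noteq> A v)"
        using l by (simp add: A_def M_add lin_functional_def distrib_right trb_add[OF card_c]) argo
    qed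
  qed
  show ?thesis
    by (rule that[OF U_add]) (simp_all add: card_U card_c flat)
qed

section \<open>The switched Maiorana--McFarland function\<close>

lemma second_derivative_maiorana_mcfarland:
  assumes "CARD('a::{field,finite}) = 2 ^ m"
  shows "second_derivative (maiorana_mcfarland m \<pi>) ((x1::'a), x2) (a1, a2) (b1, b2) \<longleftrightarrow>
    trb m (x1 * (\<pi> x2 + \<pi> (x2 + a2) + \<pi> (x2 + b2) + \<pi> (x2 + a2 + b2))
      + (a1 * \<pi> (x2 + a2) + b1 * \<pi> (x2 + b2) + (a1 + b1) * \<pi> (x2 + a2 + b2)))"
proof -
  have "x1 * (\<pi> x2 + \<pi> (x2 + a2) + \<pi> (x2 + b2) + \<pi> (x2 + a2 + b2))
      + (a1 * \<pi> (x2 + a2) + b1 * \<pi> (x2 + b2) + (a1 + b1) * \<pi> (x2 + a2 + b2))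
    = x1 * \<pi> x2 + (x1 + a1) * \<pi> (x2 + a2) + (x1 + b1) * \<pi> (x2 + b2)
      + (x1 + a1 + b1) * \<pi> (x2 + a2 + b2)"
    by (simp add: algebra_simps)
  then show ?thesis
    by (simp add: second_derivative_def maiorana_mcfarland_def trb_add[OF assms]) argo
qed

lemma maiorana_mcfarland_flat_direction:
  assumes "CARD('a::{field,finite}) = 2 ^ m"
    and flat: "\<forall>x. \<not> second_derivative (maiorana_mcfarland m \<pi>) x (a1, a2) (b1, (b2::'a))"
  shows "\<pi> x + \<pi> (x + a2) + \<pi> (x + b2) + \<pi> (x + a2 + b2) = 0
    \<and> tr m (a1 * \<pi> (x + a2) + b1 * \<pi> (x + b2) + (a1 + b1) * \<pi> (x + a2 + b2)) = 0"
proof -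
  define D where "D = \<pi> x + \<pi> (x + a2) + \<pi> (x + b2) + \<pi> (x + a2 + b2)"
  define C where "C = a1 * \<pi> (x + a2) + b1 * \<pi> (x + b2) + (a1 + b1) * \<pi> (x + a2 + b2)"
  have "\<not> trb m (x1 * D + C)" for x1
    using flat second_derivative_maiorana_mcfarland[OF assms(1), of \<pi> x1 x a1 a2 b1 b2]
    unfolding D_def C_def by simp
  from this[of 0] this have "\<not> trb m C" and "\<forall>x1. \<not> trb m (x1 * D)"
    by (simp_all add: trb_add[OF assms(1)])
  then have "D = 0" and "tr m C = 0"
    using all_not_trb_mult_iff[OF assms(1)] not_trb_iff[OF assms(1)] by blast+
  then show ?thesis
    unfolding D_def C_def by simp
qed

lemma property_PD:
  assumes "property_P m \<pi>"
    and "\<And>x. \<pi> x + \<pi> (x + a2) + \<pi> (x + b2) + \<pi> (x + a2 + b2) = 0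
      \<and> tr m (a1 * \<pi> (x + a2) + b1 * \<pi> (x + b2) + (a1 + b1) * \<pi> (x + a2 + b2)) = 0"
  shows "(a1, a2) = (0, 0) \<or> (b1, b2) = (0, 0) \<or> (a1, a2) = (b1, b2) \<or> (a2 = 0 \<and> b2 = 0)"
proof -
  have "(\<forall>x. \<pi> x + \<pi> (x + a2) + \<pi> (x + b2) + \<pi> (x + a2 + b2) = 0
      \<and> tr m (a1 * \<pi> (x + a2) + b1 * \<pi> (x + b2) + (a1 + b1) * \<pi> (x + a2 + b2)) = 0)
    \<longleftrightarrow> ((a1, a2) = (0, 0) \<or> (b1, b2) = (0, 0) \<or> (a1, a2) = (b1, b2) \<or> (a2 = 0 \<and> b2 = 0))"
    using assms(1) unfolding property_P_def by (elim allE)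
  then show ?thesis using assms(2) by blast
qed

lemma property_P_flat_directions:
  assumes "CARD('a::{field,finite}) = 2 ^ m" and P: "property_P m \<pi>"
    and flat: "\<forall>x. \<not> second_derivative (maiorana_mcfarland m \<pi>) x p q"
    and flat_swap: "\<forall>x. \<not> second_derivative (maiorana_mcfarland m \<pi> \<circ> prod.swap) x p (q :: 'a \<times> 'a)"
  shows "p = 0 \<or> q = 0 \<or> p = q"
proof -
  obtain a1 a2 b1 b2 where p: "p = (a1, a2)" and q: "q = (b1, b2)" by fastforce
  have "\<forall>x. \<not> second_derivative (maiorana_mcfarland m \<pi>) x (a2, a1) (b2, b1)"
  proof
    fix x
    show "\<not> second_derivative (maiorana_mcfarland m \<pi>) x (a2, a1) (b2, b1)"
      using flat_swap[rule_format, of "prod.swap x"]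
      by (simp add: second_derivative_comp[OF lin_map_swap] p q)
  qed
  then have "(a2, a1) = (0, 0) \<or> (b2, b1) = (0, 0) \<or> (a2, a1) = (b2, b1) \<or> (a1 = 0 \<and> b1 = 0)"
    by (intro property_PD[OF P] maiorana_mcfarland_flat_direction[OF assms(1)])
  moreover have "(a1, a2) = (0, 0) \<or> (b1, b2) = (0, 0) \<or> (a1, a2) = (b1, b2) \<or> (a2 = 0 \<and> b2 = 0)"
    using flat unfolding p q
    by (intro property_PD[OF P] maiorana_mcfarland_flat_direction[OF assms(1)])
  ultimately show ?thesis
    unfolding p q zero_prod_def by auto
qed

definition switched_MM :: "nat \<Rightarrow> nat \<Rightarrow> ('a::field \<Rightarrow> 'a) \<Rightarrow> ('a \<times> 'a) \<times> 'b::field \<times> 'b \<Rightarrow> bool" where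
  "switched_MM k m \<pi> = (\<lambda>(x, y, z).
     (if trb k z then maiorana_mcfarland m \<pi> \<circ> prod.swap else maiorana_mcfarland m \<pi>) x \<noteq> trb k (y * z))"

lemma is_GMM_switched_MM:
  assumes "CARD('a::{field,finite}) = 2 ^ m" and "bij \<pi>"
  shows "is_GMM k (switched_MM k m (\<pi> :: 'a \<Rightarrow> 'a) :: ('a \<times> 'a) \<times> 'b::field \<times> 'b \<Rightarrow> bool)"
proof -
  let ?fz = "\<lambda>z::'b. if trb k z then maiorana_mcfarland m \<pi> \<circ> prod.swap else maiorana_mcfarland m \<pi>"
  have "bent (maiorana_mcfarland m \<pi>)" "bent (maiorana_mcfarland m \<pi> \<circ> prod.swap)"
    using bent_maiorana_mcfarland[OF assms] by (auto intro: bent_comp_lin_map[OF _ lin_map_swap bij_swap])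
  then have "bent (?fz z)" for z
    by simp
  then show ?thesis
    unfolding is_GMM_def switched_MM_def by (intro exI[of _ ?fz]) auto
qed

lemma binary_field_product_second_difference:
  assumes "CARD('a::{field,finite}) = 2 ^ n"
  shows "((y::'a) + \<alpha> + \<gamma>) * (z + \<beta> + \<delta>)
    = y * z + (y + \<alpha>) * (z + \<beta>) + (y + \<gamma>) * (z + \<delta>) + (\<alpha> * \<delta> + \<beta> * \<gamma>)"
proof -
  have "y * z + (y + \<alpha>) * (z + \<beta>) + (y + \<gamma>) * (z + \<delta>) + (\<alpha> * \<delta> + \<beta> * \<gamma>)
      = (y + \<alpha> + \<gamma>) * (z + \<beta> + \<delta>) + (y * z + y * z)"
    by (simp add: algebra_simps)
  then show ?thesis by (simp add: binary_field_add_self[OF assms])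
qed

text \<open>Trace-zero \<open>z\<close>-directions keep the branch fixed; the bilinear term comes from
  the second derivative of \<open>Tr(y z)\<close>.\<close>
lemma second_derivative_switched_MM:
  assumes "CARD('b::{field,finite}) = 2 ^ k" and "\<not> trb k \<beta>" and "\<not> trb k \<delta>"
  shows "second_derivative (switched_MM k m \<pi>) (x, y, z) (a, \<alpha>, \<beta>) (b, \<gamma>, (\<delta>::'b)) \<longleftrightarrow>
    (second_derivative (if trb k z then maiorana_mcfarland m \<pi> \<circ> prod.swap else maiorana_mcfarland m \<pi>) x a b
      \<noteq> trb k (\<alpha> * \<delta> + \<beta> * \<gamma>))"
  unfolding second_derivative_def switched_MM_def
  by (simp add: assms(2,3) binary_field_product_second_difference[OF assms(1)] trb_add[OF assms(1)]) argo

lemma switched_MM_flat_directions: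
  fixes \<pi> :: "'a::{field,finite} \<Rightarrow> 'a" and \<alpha> \<beta> \<gamma> \<delta> :: "'b::{field,finite}"
  assumes "CARD('a) = 2 ^ m" and card_b: "CARD('b) = 2 ^ k"
    and "property_P m \<pi>"
    and flat: "\<And>x. \<not> second_derivative (switched_MM k m \<pi>) x u v"
    and u: "u = (p, \<alpha>, \<beta>)" and v: "v = (q, \<gamma>, \<delta>)"
    and nontrace: "\<not> trb k \<beta>" "\<not> trb k \<delta>" "\<not> trb k (\<alpha> * \<delta> + \<beta> * \<gamma>)"
  shows "p = 0 \<or> q = 0 \<or> p = q"
proof (rule property_P_flat_directions[OF assms(1,3)])
  obtain z1 :: 'b where "trb k z1" using ex_trb[OF card_b] by blast
  show "\<forall>x. \<not> second_derivative (maiorana_mcfarland m \<pi>) x p q"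
  proof
    fix x
    show "\<not> second_derivative (maiorana_mcfarland m \<pi>) x p q"
      using flat[of "(x, 0, 0)"]
      by (simp add: u v nontrace second_derivative_switched_MM[OF card_b])
  qed
  show "\<forall>x. \<not> second_derivative (maiorana_mcfarland m \<pi> \<circ> prod.swap) x p q"
  proof
    fix x
    show "\<not> second_derivative (maiorana_mcfarland m \<pi> \<circ> prod.swap) x p q"
      using flat[of "(x, 0, z1)"] \<open>trb k z1\<close>
      by (simp add: u v nontrace second_derivative_switched_MM[OF card_b])
  qed
qed

lemma card_eq_twice_card_kernel:
  fixes t :: "'v::ab_group_add \<Rightarrow> bool"
  assumes "finite S" and S_add: "\<And>u v. u \<in> S \<Longrightarrow> v \<in> S \<Longrightarrow> u + v \<in> S"
    and t_add: "\<And>u v. t (u + v) = (t u \<noteq> t v)" and "u0 \<in> S" "t u0"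
  shows "card S = 2 * card {u \<in> S. \<not> t u}"
proof -
  have inj: "inj_on (\<lambda>u. u + u0) A" for A by (simp add: inj_on_def)
  have "card {u \<in> S. t u} \<le> card {u \<in> S. \<not> t u}"
    by (rule card_inj_on_le[OF inj]) (use assms in auto)
  moreover have "card {u \<in> S. \<not> t u} \<le> card {u \<in> S. t u}"
    by (rule card_inj_on_le[OF inj]) (use assms in auto)
  moreover have "card S = card {u \<in> S. t u} + card {u \<in> S. \<not> t u}"
    using card_Int_Diff[OF \<open>finite S\<close>, of "{u. t u}"] by (simp add: Int_def set_diff_eq)
  ultimately show ?thesis by linarith
qed

lemma card_le_twice_card_kernel:
  fixes t :: "'v::ab_group_add \<Rightarrow> bool"
  assumes "finite S" and "\<And>u v. u \<in> S \<Longrightarrow> v \<in> S \<Longrightarrow> u + v \<in> S"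
    and "\<And>u v. t (u + v) = (t u \<noteq> t v)"
  shows "card S \<le> 2 * card {u \<in> S. \<not> t u}"
proof (cases "\<exists>u0\<in>S. t u0")
  case True
  then show ?thesis using card_eq_twice_card_kernel[OF assms] by fastforce
next
  case False
  then have "{u \<in> S. \<not> t u} = S" by auto
  then show ?thesis by simp
qed

lemma card_trb_kernel:
  assumes "CARD('a::{field,finite}) = 2 ^ n"
  shows "2 * card {x::'a. \<not> trb n x} = 2 ^ n"
proof -
  obtain x0 :: 'a where "trb n x0" using ex_trb[OF assms] by blast
  then show ?thesis
    using card_eq_twice_card_kernel[of UNIV "trb n" x0] by (simp add: trb_add[OF assms] assms)
qed

lemma card_image_le_4:
  fixes p :: "'v::ab_group_add \<Rightarrow> 'w::ab_group_add"
  assumes "finite U" and U_add: "\<And>u v. u \<in> U \<Longrightarrow> v \<in> U \<Longrightarrow> u + v \<in> U"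
    and p: "lin_map p" and char_2: "\<And>w::'w. w + w = 0"
    and c_add: "\<And>u v w. c u (v + w) = (c u v \<noteq> c u w)"
    and flat: "\<And>u v. u \<in> U \<Longrightarrow> v \<in> U \<Longrightarrow> \<not> c u v \<Longrightarrow> p u = 0 \<or> p v = 0 \<or> p u = p v"
  shows "card (p ` U) \<le> 4"
proof (rule ccontr)
  assume "\<not> card (p ` U) \<le> 4"
  then have pick: "\<exists>w\<in>p ` U. w \<notin> set ws" if "length ws \<le> 4" for ws
    using card_mono[of "set ws" "p ` U"] card_length[of ws] that by auto
  obtain v where v: "v \<in> U" "p v \<noteq> 0"
    using pick[of "[0]"] by auto
  obtain w where w: "w \<in> U" "p w \<notin> {0, p v}"
    using pick[of "[0, p v]"] by auto
  obtain u where u: "u \<in> U" "p u \<notin> {0, p v, p w, p v + p w}"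
    using pick[of "[0, p v, p w, p v + p w]"] by auto
  have "p v + p w \<noteq> 0"
  proof
    assume "p v + p w = 0"
    then have "p v + p w = p v + p v" by (simp add: char_2)
    with w show False by simp
  qed
  moreover have "p (v + w) = p v + p w" using p by (simp add: lin_map_def)
  \<comment> \<open>by \<open>c_add\<close>, one of \<open>c u v\<close>, \<open>c u w\<close>, \<open>c u (v + w)\<close> fails, and \<open>flat\<close> applies to that pair\<close>
  ultimately show False
    using flat[OF u(1) v(1)] flat[OF u(1) w(1)] flat[OF u(1) U_add[OF v(1) w(1)]] c_add[of u v w] u v w
    by auto
qed

lemma switched_MM_flat_projections:
  fixes \<pi> :: "'a::{field,finite} \<Rightarrow> 'a" and U :: "(('a \<times> 'a) \<times> 'b::{field,finite} \<times> 'b) set"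
  assumes card_a: "CARD('a) = 2 ^ m" and card_b: "CARD('b) = 2 ^ k" and P: "property_P m \<pi>"
    and U_add: "\<And>u v. u \<in> U \<Longrightarrow> v \<in> U \<Longrightarrow> u + v \<in> U"
    and flat: "\<And>x u v. u \<in> U \<Longrightarrow> v \<in> U \<Longrightarrow> \<not> second_derivative (switched_MM k m \<pi>) x u v"
    and kernel: "\<And>u. u \<in> U \<Longrightarrow> \<not> trb k (snd (snd u))"
  shows "card (fst ` U) \<le> 4"
proof (rule card_image_le_4[OF _ U_add])
  define c where "c u v \<longleftrightarrow> trb k (fst (snd u) * snd (snd v) + snd (snd u) * fst (snd v))"
    for u v :: "('a \<times> 'a) \<times> 'b \<times> 'b"
  show "c u (v + w) = (c u v \<noteq> c u w)" for u v w
  proof -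
    have "fst (snd u) * snd (snd (v + w)) + snd (snd u) * fst (snd (v + w))
        = (fst (snd u) * snd (snd v) + snd (snd u) * fst (snd v))
          + (fst (snd u) * snd (snd w) + snd (snd u) * fst (snd w))"
      by (simp add: algebra_simps)
    then show ?thesis by (simp only: c_def trb_add[OF card_b])
  qed
  show "fst u = 0 \<or> fst v = 0 \<or> fst u = fst v" if "u \<in> U" "v \<in> U" "\<not> c u v" for u v
    using that kernel unfolding c_def
    by (intro switched_MM_flat_directions[OF card_a card_b P flat, of u v]) (auto simp: prod_eq_iff)
  show "w + w = 0" for w :: "'a \<times> 'a"
    by (simp add: prod_eq_iff binary_field_add_self[OF card_a])
qed (simp_all add: lin_map_def)

lemma not_MM_sharp_switched_MM:
  fixes \<pi> :: "'a::{field,finite} \<Rightarrow> 'a"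
  assumes "m > k + 2" and card_a: "CARD('a) = 2 ^ m" and card_b: "CARD('b::{field,finite}) = 2 ^ k"
    and card_c: "CARD('c::{field,finite}) = 2 ^ (m + k)" and P: "property_P m \<pi>"
  shows "\<not> MM_sharp TYPE('c) (m + k) (switched_MM k m \<pi> :: ('a \<times> 'a) \<times> 'b \<times> 'b \<Rightarrow> bool)"
proof
  assume "MM_sharp TYPE('c) (m + k) (switched_MM k m \<pi> :: ('a \<times> 'a) \<times> 'b \<times> 'b \<Rightarrow> bool)"
  then obtain U :: "(('a \<times> 'a) \<times> 'b \<times> 'b) set" where U_add: "\<And>u v. u \<in> U \<Longrightarrow> v \<in> U \<Longrightarrow> u + v \<in> U"
    and card_U: "card U = 2 ^ (m + k)"
    and flat: "\<And>x u v. u \<in> U \<Longrightarrow> v \<in> U \<Longrightarrow> \<not> second_derivative (switched_MM k m \<pi>) x u v"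
    by (rule MM_sharp_flat_subspace[OF card_c]) blast
  define U' where "U' = {u \<in> U. \<not> trb k (snd (snd u))}"
  define K where "K = {\<beta>::'b. \<not> trb k \<beta>}"
  have U'_add: "u + v \<in> U'" if "u \<in> U'" "v \<in> U'" for u v
    using that U_add by (auto simp: U'_def trb_add[OF card_b])
  have card_U': "card U \<le> 2 * card U'"
    unfolding U'_def by (rule card_le_twice_card_kernel[OF _ U_add]) (simp_all add: trb_add[OF card_b])
  have card_U'_le: "card U' \<le> card (fst ` U') * (2 ^ k * card K)"
  proof -
    have "U' \<subseteq> fst ` U' \<times> (UNIV \<times> K)"
    proof
      fix u assume "u \<in> U'"
      then have "fst u \<in> fst ` U'" "snd (snd u) \<in> K" by (auto simp: U'_def K_def)
      then show "u \<in> fst ` U' \<times> (UNIV \<times> K)" by (simp add: mem_Times_iff)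
    qed
    then show ?thesis
      using card_mono[of "fst ` U' \<times> (UNIV \<times> K)" U'] by (simp add: card_cartesian_product card_b)
  qed
  have card_fst_U': "card (fst ` U') \<le> 4"
    by (rule switched_MM_flat_projections[OF card_a card_b P U'_add]) (auto simp: U'_def flat)
  have card_K: "2 * card K = 2 ^ k"
    unfolding K_def by (rule card_trb_kernel[OF card_b])
  have "(2::nat) ^ (m + k) \<le> 2 * card U'"
    using card_U card_U' by simp
  also have "\<dots> \<le> 2 * (card (fst ` U') * (2 ^ k * card K))"
    using card_U'_le by simp
  also have "\<dots> = card (fst ` U') * (2 ^ k * 2 ^ k)"
    by (simp flip: card_K)
  also have "\<dots> \<le> 4 * (2 ^ k * 2 ^ k)"
    using card_fst_U' by simp
  also have "\<dots> = 2 ^ (k + k + 2)"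
    by (simp add: power_add)
  finally show False
    using assms(1) power_le_imp_le_exp[of 2 "m + k" "k + k + 2"] by simp
qed

theorem theorem3p7:
  fixes m k :: nat
    and \<pi> :: "'a::{field,finite} \<Rightarrow> 'a"
  assumes "k > 0" and "m > k + 2"
    and "CARD('a) = 2 ^ m"
    and "CARD('b::{field,finite}) = 2 ^ k"
    and "CARD('c::{field,finite}) = 2 ^ (m + k)"
    and "bij \<pi>" and "property_P m \<pi>"
  shows "let fz = (\<lambda>(z::'b) (x1::'a, x2::'a).
                    if \<not> trb k z then trb m (x1 * \<pi> x2) else trb m (x2 * \<pi> x1));
             f = (\<lambda>((x1::'a, x2::'a), y::'b, z::'b). fz z (x1, x2) \<noteq> trb k (y * z))
         in is_GMM k f \<and> \<not> MM_sharp TYPE('c) (m + k) f"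
proof -
  have "(let fz = (\<lambda>(z::'b) (x1::'a, x2::'a).
                    if \<not> trb k z then trb m (x1 * \<pi> x2) else trb m (x2 * \<pi> x1))
         in (\<lambda>((x1::'a, x2::'a), y::'b, z::'b). fz z (x1, x2) \<noteq> trb k (y * z)))
      = switched_MM k m \<pi>"
    by (auto simp: fun_eq_iff switched_MM_def maiorana_mcfarland_def)
  then show ?thesis
    using is_GMM_switched_MM[OF assms(3,6)] not_MM_sharp_switched_MM[OF assms(2,3,4,5,7)]
    by (simp add: Let_def)
qed

end
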